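(* Let $X$ be a topological vector space, $Z$ a locally convex topological vector space, $C\subseteq Z$ a nonempty closed convex cone with $C^-\neq\{0\}$, $x_0\in X$, and $f:X\to\mathcal{F}(Z,C)$ convex-valued. Assume there is a set $B\subseteq Z^*$ with $\{tz^*\colon t\ge0,\ z^*\in B\}=C^-$ such that \[ \forall z\in Z:\ \sup_{z^*\in B}z^*(z)<\infty\qquad\text{and}\qquad\forall V\in\mathcal{V}(0):\ \inf_{z^*\in B}\sup_{z\in V}[-z^*(z)]>0, \] and such that the scalarizations are lower semicontinuous at $x_0$ uniformly with respect to $B$, i.e. for every $\varepsilon>0$ there is a neighborhood $U$ of $x_0$ with $\varphi_{(f,z^* )}(x)>\varphi_{(f,z^* )}(x_0)-\varepsilon$ for all $x\in U$ and all $z^*\in B$. Then $f$ is Hausdorff upper continuous at $x_0$.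
   Context: $\mathcal{F}(Z,C)=\{A\subseteq Z\colon A=\operatorname{cl}(A+C)\}$ (empty set included); $C^-=\{z^*\in Z^*\colon z^*(z)\le0\ \forall z\in C\}$; $\mathcal{V}(0)$ is the system of neighborhoods of $0$ in $Z$. $\varphi_{(f,z^* )}(x)=\inf_{z\in f(x)}(-z^*(z))$, with $\inf\emptyset=+\infty$. $f$ is Hausdorff upper continuous at $x_0$ iff for every neighborhood $V$ of $0$ in $Z$ there is a neighborhood $U$ of $x_0$ with $f(x)\subseteq f(x_0)+V$ for all $x\in U$. *)

theory Defs
  imports "HOL-Analysis.Analysis"
begin

text \<open>Real topological vector spaces: addition and scalar multiplication jointly continuous (stated via the product-topology neighbourhood base).\<close>
class topological_real_vector = real_vector + topological_space +
  assumes continuous_add_tvs: "\<And>x y W. open W \<Longrightarrow> x + y \<in> W \<Longrightarrow>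
      \<exists>U V. open U \<and> open V \<and> x \<in> U \<and> y \<in> V \<and> (\<forall>u\<in>U. \<forall>v\<in>V. u + v \<in> W)"
  assumes continuous_scaleR_tvs: "\<And>(c::real) x W. open W \<Longrightarrow> c *\<^sub>R x \<in> W \<Longrightarrow>
      \<exists>e>0. \<exists>V. open V \<and> x \<in> V \<and> (\<forall>d. \<bar>d - c\<bar> < e \<longrightarrow> (\<forall>v\<in>V. d *\<^sub>R v \<in> W))"

text \<open>Locally convex: every neighbourhood of 0 contains a convex open neighbourhood of 0
  (convexity written out as in the definition of convex, since class specs cannot use the sort-constrained constant).\<close>
class locally_convex_tvs = topological_real_vector +
  assumes locally_convex: "\<And>U::'a set. open U \<Longrightarrow> 0 \<in> U \<Longrightarrow> \<exists>V. open V \<and> 0 \<in> V \<and> V \<subseteq> U \<and>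
      (\<forall>x\<in>V. \<forall>y\<in>V. \<forall>u\<ge>0. \<forall>v\<ge>0. u + v = 1 \<longrightarrow> u *\<^sub>R x + v *\<^sub>R y \<in> V)"

definition is_nbhd :: "'a::topological_space set \<Rightarrow> 'a \<Rightarrow> bool" where
  "is_nbhd S x \<longleftrightarrow> (\<exists>W. open W \<and> x \<in> W \<and> W \<subseteq> S)"

definition topdual :: "('b::topological_real_vector \<Rightarrow> real) set" where
  "topdual = {zs. linear zs \<and> continuous_on UNIV zs}"

definition neg_dual_cone :: "'b::topological_real_vector set \<Rightarrow> ('b \<Rightarrow> real) set" where
  "neg_dual_cone C = {zs \<in> topdual. \<forall>z\<in>C. zs z \<le> 0}"

definition set_plus_Z :: "'b::real_vector set \<Rightarrow> 'b set \<Rightarrow> 'b set" where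
  "set_plus_Z A D = {a + d | a d. a \<in> A \<and> d \<in> D}"

text \<open>The family F(Z,C) of sets A with A = cl(A + C) (empty set included).\<close>
definition FZC :: "'b::topological_real_vector set \<Rightarrow> 'b set set" where
  "FZC C = {A. A = closure (set_plus_Z A C)}"

text \<open>Scalarization phi_(f,z^*)(x) = inf_{z in f x} (- z^*(z)), with inf of empty set = +infinity.\<close>
definition scalarization :: "('a \<Rightarrow> 'b set) \<Rightarrow> ('b \<Rightarrow> real) \<Rightarrow> 'a \<Rightarrow> ereal" where
  "scalarization f zs x = (INF z\<in>f x. ereal (- zs z))"

definition hausdorff_upper_continuous_at ::
  "('a::topological_space \<Rightarrow> 'b::topological_real_vector set) \<Rightarrow> 'a \<Rightarrow> bool" where
  "hausdorff_upper_continuous_at f x0 \<longleftrightarrow>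
     (\<forall>V. is_nbhd V (0::'b) \<longrightarrow>
        (\<exists>U. is_nbhd U x0 \<and> (\<forall>x\<in>U. f x \<subseteq> set_plus_Z (f x0) V)))"

end

theory Submission
  imports Defs
begin

text \<open>
  Let \<open>W \<subseteq> V\<close> be an open convex neighbourhood of \<open>0\<close>; the second condition on \<open>B\<close>, applied
  to \<open>-W\<close>, yields \<open>\<epsilon> > 0\<close> such that every \<open>z\<^sup>* \<in> B\<close> exceeds \<open>\<epsilon>\<close> somewhere on \<open>W\<close>. Take \<open>U\<close> from
  the uniform lower semicontinuity for this \<open>\<epsilon>\<close>. If some \<open>z \<in> f x\<close>, \<open>x \<in> U\<close>, lay outside
  \<open>f x\<^sub>0 + V\<close>, Hahn-Banach would separate \<open>z\<close> from the open convex set \<open>f x\<^sub>0 + W\<close> by a nonzero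
  continuous functional. As \<open>f x\<^sub>0 = cl (f x\<^sub>0 + C)\<close>, this functional is bounded above on
  \<open>f x\<^sub>0 + C\<close> and therefore lies in \<open>C\<^sup>-\<close>, so it is a positive multiple of some \<open>z\<^sup>* \<in> B\<close>.
  Then \<open>z\<^sup>*(a) + \<epsilon> < z\<^sup>*(z)\<close> for all \<open>a \<in> f x\<^sub>0\<close>, i.e.
  \<open>\<phi>\<^sub>(\<^sub>f\<^sub>,\<^sub>z\<^sub>*\<^sub>)(x) \<le> \<phi>\<^sub>(\<^sub>f\<^sub>,\<^sub>z\<^sub>*\<^sub>)(x\<^sub>0) - \<epsilon>\<close>, contradicting the choice of \<open>U\<close>.
\<close>

section \<open>Sublinear functionals and the Hahn-Banach theorem\<close>

definition sublinear :: "('a::real_vector \<Rightarrow> real) \<Rightarrow> bool" where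
  "sublinear q \<longleftrightarrow> (\<forall>x y. q (x + y) \<le> q x + q y) \<and> (\<forall>t>0. \<forall>x. q (t *\<^sub>R x) \<le> t * q x)"

lemma sublinear_add: "sublinear q \<Longrightarrow> q (x + y) \<le> q x + q y"
  by (simp add: sublinear_def)

lemma sublinear_scaleR_le: "sublinear q \<Longrightarrow> t > 0 \<Longrightarrow> q (t *\<^sub>R x) \<le> t * q x"
  by (simp add: sublinear_def)

lemma sublinear_zero:
  assumes "sublinear q"
  shows "q 0 = 0"
proof -
  have "q 0 \<le> q 0 + q 0" using sublinear_add[OF assms, of 0 0] by simp
  moreover have "q ((1/2) *\<^sub>R 0) \<le> (1/2) * q 0" using sublinear_scaleR_le[OF assms, of "1/2" 0] by simp
  ultimately show ?thesis by simp
qed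

lemma sublinear_scaleR:
  assumes "sublinear q" "t > 0"
  shows "q (t *\<^sub>R x) = t * q x"
proof -
  have "q ((1/t) *\<^sub>R (t *\<^sub>R x)) \<le> (1/t) * q (t *\<^sub>R x)"
    using sublinear_scaleR_le[OF assms(1), of "1/t" "t *\<^sub>R x"] assms(2) by simp
  then have "q x \<le> (1/t) * q (t *\<^sub>R x)" using assms(2) by simp
  then have "t * q x \<le> q (t *\<^sub>R x)" using assms(2) by (simp add: field_simps)
  with sublinear_scaleR_le[OF assms, of x] show ?thesis by linarith
qed

lemma sublinear_scaleR_nonneg: "sublinear q \<Longrightarrow> t \<ge> 0 \<Longrightarrow> q (t *\<^sub>R x) = t * q x"
  using sublinear_scaleR[of q t x] sublinear_zero[of q] by (cases "t = 0") auto

lemma sublinear_neg_le: "sublinear q \<Longrightarrow> - q (- x) \<le> q x"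
  using sublinear_add[of q x "- x"] sublinear_zero[of q] by simp

lemma sublinear_minorant_at_neg:
  fixes q :: "'a::real_vector \<Rightarrow> real"
  assumes sq: "sublinear q" and cy: "c \<le> q y"
  shows "\<exists>r. sublinear r \<and> r \<le> q \<and> r (- y) \<le> - c"
proof -
  define r where "r x = (INF t\<in>{0..}. q (x + t *\<^sub>R y) - t * c)" for x
  have lb: "- q (- x) \<le> q (x + t *\<^sub>R y) - t * c" if "t \<ge> 0" for x t
  proof -
    have "q (t *\<^sub>R y) \<le> q (x + t *\<^sub>R y) + q (- x)"
      using sublinear_add[OF sq, of "x + t *\<^sub>R y" "- x"] by simp
    moreover have "t * c \<le> q (t *\<^sub>R y)"
      using sublinear_scaleR_nonneg[OF sq that] cy that by (simp add: mult_left_mono)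
    ultimately show ?thesis by simp
  qed
  have upper: "r x \<le> q (x + t *\<^sub>R y) - t * c" if "t \<ge> 0" for x t
    unfolding r_def using that lb by (intro cInf_lower bdd_belowI[where m="- q (- x)"]) auto
  have greatest: "z \<le> r x" if "\<And>t. t \<ge> 0 \<Longrightarrow> z \<le> q (x + t *\<^sub>R y) - t * c" for z x
    unfolding r_def using that by (intro cInf_greatest) auto
  have "r (x1 + x2) \<le> r x1 + r x2" for x1 x2
  proof -
    have "r (x1 + x2) \<le> (q (x1 + t1 *\<^sub>R y) - t1 * c) + (q (x2 + t2 *\<^sub>R y) - t2 * c)"
      if "t1 \<ge> 0" "t2 \<ge> 0" for t1 t2
    proof -
      have "r (x1 + x2) \<le> q ((x1 + t1 *\<^sub>R y) + (x2 + t2 *\<^sub>R y)) - (t1 + t2) * c"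
        using upper[of "t1 + t2" "x1 + x2"] that by (simp add: algebra_simps)
      then show ?thesis using sublinear_add[OF sq, of "x1 + t1 *\<^sub>R y" "x2 + t2 *\<^sub>R y"]
        by (simp add: algebra_simps)
    qed
    then have "r (x1 + x2) - (q (x1 + t1 *\<^sub>R y) - t1 * c) \<le> r x2" if "t1 \<ge> 0" for t1
      using that by (intro greatest) force
    then have "r (x1 + x2) - r x2 \<le> r x1"
      by (intro greatest) force
    then show ?thesis by simp
  qed
  moreover have "r (t *\<^sub>R x) \<le> t * r x" if t: "t > 0" for t x
  proof -
    have "r (t *\<^sub>R x) / t \<le> q (x + s *\<^sub>R y) - s * c" if s: "s \<ge> 0" for s
    proof -
      have "r (t *\<^sub>R x) \<le> q (t *\<^sub>R x + (t * s) *\<^sub>R y) - (t * s) * c"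
        using upper s t by simp
      also have "t *\<^sub>R x + (t * s) *\<^sub>R y = t *\<^sub>R (x + s *\<^sub>R y)"
        by (simp add: algebra_simps)
      also have "q (t *\<^sub>R (x + s *\<^sub>R y)) = t * q (x + s *\<^sub>R y)"
        using sublinear_scaleR[OF sq t] .
      finally have "r (t *\<^sub>R x) \<le> t * (q (x + s *\<^sub>R y) - s * c)" by (simp add: algebra_simps)
      then show ?thesis using t by (simp add: field_simps)
    qed
    then have "r (t *\<^sub>R x) / t \<le> r x" by (rule greatest)
    then show ?thesis using t by (simp add: field_simps)
  qed
  ultimately have "sublinear r" by (simp add: sublinear_def)
  moreover have "r \<le> q" using upper[of 0] by (simp add: le_fun_def)
  moreover have "r (- y) \<le> - c" using upper[of 1 "- y"] sublinear_zero[OF sq] by simp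
  ultimately show ?thesis by blast
qed

lemma sublinear_INF_chain:
  fixes p :: "'a::real_vector \<Rightarrow> real"
  assumes ne: "Q \<noteq> {}" and sub: "\<And>q. q \<in> Q \<Longrightarrow> sublinear q \<and> q \<le> p"
    and chain: "\<And>a b. a \<in> Q \<Longrightarrow> b \<in> Q \<Longrightarrow> a \<le> b \<or> b \<le> a"
  shows "sublinear (\<lambda>x. INF q\<in>Q. q x)" and "\<And>q. q \<in> Q \<Longrightarrow> (\<lambda>x. INF q\<in>Q. q x) \<le> q"
proof -
  define u where "u x = (INF q\<in>Q. q x)" for x
  have "- p (- x) \<le> q x" if "q \<in> Q" for q x
  proof -
    have "q (- x) \<le> p (- x)" using sub[OF that] by (simp add: le_fun_def)
    with sublinear_neg_le[of q x] sub[OF that] show ?thesis by linarith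
  qed
  then have lower: "u x \<le> q x" if "q \<in> Q" for q x
    unfolding u_def using that by (intro cInf_lower bdd_belowI[where m="- p (- x)"]) auto
  have greatest: "z \<le> u x" if "\<And>q. q \<in> Q \<Longrightarrow> z \<le> q x" for z x
    unfolding u_def using that ne by (intro cInf_greatest) auto
  have "u (x + y) \<le> u x + u y" for x y
  proof -
    have "u (x + y) \<le> q1 x + q2 y" if q12: "q1 \<in> Q" "q2 \<in> Q" for q1 q2
    proof -
      obtain m where m: "m \<in> Q" "m \<le> q1" "m \<le> q2" using chain[OF q12] q12 by blast
      have "u (x + y) \<le> m (x + y)" using lower m(1) .
      also have "\<dots> \<le> m x + m y" using sublinear_add sub[OF m(1)] by blast
      also have "\<dots> \<le> q1 x + q2 y" using m by (auto simp: le_fun_def intro: add_mono)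
      finally show ?thesis .
    qed
    then have "u (x + y) - q2 y \<le> u x" if "q2 \<in> Q" for q2
      using that by (intro greatest) force
    then have "u (x + y) - u x \<le> u y"
      by (intro greatest) force
    then show ?thesis by simp
  qed
  moreover have "u (t *\<^sub>R x) \<le> t * u x" if t: "t > 0" for t x
  proof -
    have "u (t *\<^sub>R x) \<le> t * q x" if "q \<in> Q" for q
    proof -
      have "q (t *\<^sub>R x) \<le> t * q x" using sublinear_scaleR_le[of q t x] sub[OF that] t by blast
      with lower[OF that, of "t *\<^sub>R x"] show ?thesis by linarith
    qed
    then have "u (t *\<^sub>R x) / t \<le> u x"
      using t by (intro greatest) (simp add: field_simps)
    then show ?thesis using t by (simp add: field_simps)
  qed
  ultimately show "sublinear (\<lambda>x. INF q\<in>Q. q x)" by (simp add: sublinear_def u_def)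
  show "(\<lambda>x. INF q\<in>Q. q x) \<le> q" if "q \<in> Q" for q
    using lower[OF that] by (simp add: le_fun_def u_def)
qed

lemma exists_minimal_sublinear_below:
  fixes p :: "'a::real_vector \<Rightarrow> real"
  assumes "sublinear p"
  shows "\<exists>q. sublinear q \<and> q \<le> p \<and> (\<forall>r. sublinear r \<and> r \<le> q \<longrightarrow> r = q)"
proof -
  define A where "A = {q. sublinear q \<and> q \<le> p}"
  have po: "partial_order_on A (relation_of (\<lambda>a b. b \<le> a) A)"
    by (rule partial_order_on_relation_ofI) auto
  have "\<exists>m\<in>A. \<forall>a\<in>A. a \<le> m \<longrightarrow> a = m"
  proof (rule predicate_Zorn[OF po])
    fix Q assume Q: "Q \<in> Chains (relation_of (\<lambda>a b. b \<le> a) A)"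
    then have QA: "Q \<subseteq> A" by (rule Chains_relation_of)
    have chain: "a \<le> b \<or> b \<le> a" if "a \<in> Q" "b \<in> Q" for a b
      using Q that unfolding Chains_def relation_of_def by auto
    show "\<exists>u\<in>A. \<forall>a\<in>Q. u \<le> a"
    proof (cases "Q = {}")
      case True
      then show ?thesis using assms by (auto simp: A_def)
    next
      case False
      have sub: "sublinear q \<and> q \<le> p" if "q \<in> Q" for q
        using QA that unfolding A_def by blast
      have INF_sub: "sublinear (\<lambda>x. INF q\<in>Q. q x)"
        and INF_le: "\<And>q. q \<in> Q \<Longrightarrow> (\<lambda>x. INF q\<in>Q. q x) \<le> q"
        using sublinear_INF_chain[of Q p] False sub chain by blast+
      obtain q0 where "q0 \<in> Q" using False by blast
      then have "(\<lambda>x. INF q\<in>Q. q x) \<le> p"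
        using INF_le sub by (blast intro: order.trans)
      with INF_sub INF_le show ?thesis by (auto simp: A_def)
    qed
  qed
  then show ?thesis unfolding A_def by (auto intro: order.trans)
qed

lemma minimal_sublinear_imp_linear:
  fixes q :: "'a::real_vector \<Rightarrow> real"
  assumes sq: "sublinear q" and minimal: "\<forall>r. sublinear r \<and> r \<le> q \<longrightarrow> r = q"
  shows "linear q"
proof -
  have neg: "q (- y) = - q y" for y
  proof -
    obtain r where "sublinear r" "r \<le> q" "r (- y) \<le> - q y"
      using sublinear_minorant_at_neg[OF sq order.refl] by blast
    with minimal have "q (- y) \<le> - q y" by auto
    with sublinear_neg_le[OF sq, of y] show ?thesis by simp
  qed
  show ?thesis
  proof (rule linearI)
    fix x y
    have "q x \<le> q (x + y) + q (- y)"
      using sublinear_add[OF sq, of "x + y" "- y"] by simp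
    then show "q (x + y) = q x + q y" using neg[of y] sublinear_add[OF sq, of x y] by simp
  next
    fix c :: real and x
    show "q (c *\<^sub>R x) = c *\<^sub>R q x"
    proof (cases "c \<ge> 0")
      case True
      then show ?thesis using sublinear_scaleR_nonneg[OF sq] by simp
    next
      case False
      then have "q ((- c) *\<^sub>R (- x)) = (- c) * q (- x)" by (intro sublinear_scaleR_nonneg[OF sq]) auto
      then show ?thesis using neg[of x] by simp
    qed
  qed
qed

lemma hahn_banach_sublinear:
  fixes p :: "'a::real_vector \<Rightarrow> real"
  assumes sp: "sublinear p" and y: "c \<le> p y"
  shows "\<exists>F. linear F \<and> (\<forall>x. F x \<le> p x) \<and> c \<le> F y"
proof -
  obtain r where r: "sublinear r" "r \<le> p" "r (- y) \<le> - c"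
    using sublinear_minorant_at_neg[OF sp y] by blast
  obtain q where q: "sublinear q" "q \<le> r" "\<forall>s. sublinear s \<and> s \<le> q \<longrightarrow> s = q"
    using exists_minimal_sublinear_below[OF r(1)] by blast
  have lin: "linear q" using minimal_sublinear_imp_linear q(1,3) by blast
  have "q \<le> p" using q(2) r(2) by (rule order.trans)
  moreover have "q (- y) \<le> - c" using q(2) r(3) by (auto simp: le_fun_def intro: order.trans)
  then have "c \<le> q y" using linear_neg[OF lin, of y] by simp
  ultimately show ?thesis using lin by (auto simp: le_fun_def)
qed

section \<open>Separation in topological vector spaces\<close>

lemma tvs_open_translation:
  fixes S :: "'a::topological_real_vector set"
  assumes "open S"
  shows "open ((+) a ` S)"
proof (rule Topological_Spaces.openI)
  fix y assume "y \<in> (+) a ` S"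
  then have "y + - a \<in> S" by auto
  then obtain U V where UV: "open U" "y \<in> U" "- a \<in> V" "\<forall>u\<in>U. \<forall>v\<in>V. u + v \<in> S"
    using continuous_add_tvs[OF assms, of y "- a"] by blast
  have "U \<subseteq> (+) a ` S"
  proof
    fix u assume "u \<in> U"
    then have "u + - a \<in> S" using UV(3,4) by blast
    moreover have "u = a + (u + - a)" by simp
    ultimately show "u \<in> (+) a ` S" by blast
  qed
  then show "\<exists>T. open T \<and> y \<in> T \<and> T \<subseteq> (+) a ` S" using UV by blast
qed

lemma tvs_open_scaling:
  fixes S :: "'a::topological_real_vector set"
  assumes "open S" "c \<noteq> 0"
  shows "open ((*\<^sub>R) c ` S)"
proof (rule Topological_Spaces.openI)
  fix y assume "y \<in> (*\<^sub>R) c ` S"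
  then have "(1/c) *\<^sub>R y \<in> S" using assms(2) by auto
  then obtain e V where eV: "e > 0" "open V" "y \<in> V" "\<forall>d. \<bar>d - 1/c\<bar> < e \<longrightarrow> (\<forall>v\<in>V. d *\<^sub>R v \<in> S)"
    using continuous_scaleR_tvs[OF assms(1)] by blast
  have "V \<subseteq> (*\<^sub>R) c ` S"
  proof
    fix v assume "v \<in> V"
    then have "(1/c) *\<^sub>R v \<in> S" using eV(1,4) by auto
    moreover have "v = c *\<^sub>R ((1/c) *\<^sub>R v)" using assms(2) by simp
    ultimately show "v \<in> (*\<^sub>R) c ` S" by blast
  qed
  then show "\<exists>T. open T \<and> y \<in> T \<and> T \<subseteq> (*\<^sub>R) c ` S" using eV by blast
qed

lemma tvs_open_absorbing:
  fixes K :: "'a::topological_real_vector set"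
  assumes "open K" "0 \<in> K"
  shows "\<exists>e>0. \<forall>d. \<bar>d\<bar> < e \<longrightarrow> d *\<^sub>R x \<in> K"
proof -
  have "0 *\<^sub>R x \<in> K" using assms(2) by simp
  then obtain e V where "e > 0" "x \<in> V" "\<forall>d. \<bar>d - 0\<bar> < e \<longrightarrow> (\<forall>v\<in>V. d *\<^sub>R v \<in> K)"
    using continuous_scaleR_tvs[OF assms(1)] by blast
  then show ?thesis by auto
qed

lemma tvs_open_set_plus_Z:
  fixes W :: "'a::topological_real_vector set"
  assumes "open W"
  shows "open (set_plus_Z A W)"
proof -
  have "set_plus_Z A W = (\<Union>a\<in>A. (+) a ` W)" by (auto simp: set_plus_Z_def)
  then show ?thesis by (simp add: open_UN tvs_open_translation[OF assms])
qed

lemma tvs_linear_continuous_if_bounded_above: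
  fixes F :: "'a::topological_real_vector \<Rightarrow> real"
  assumes lin: "linear F" and "open K" "0 \<in> K" and bound: "\<forall>k\<in>K. F k \<le> 1"
  shows "continuous_on UNIV F"
  unfolding continuous_on_topological
proof (intro ballI allI impI)
  fix x :: 'a and S :: "real set" assume S: "open S" "F x \<in> S"
  then obtain e where e: "e > 0" "\<forall>y. dist y (F x) < e \<longrightarrow> y \<in> S" by (auto simp: open_dist)
  define M where "M = K \<inter> (*\<^sub>R) (-1) ` K"
  have "open M" unfolding M_def using assms(2) tvs_open_scaling[OF assms(2), of "-1"] by auto
  have FM: "\<bar>F m\<bar> \<le> 1" if m: "m \<in> M" for m
  proof -
    have "m \<in> K" using m by (simp add: M_def)
    moreover obtain k where "k \<in> K" "m = (-1) *\<^sub>R k" using m unfolding M_def by blast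
    moreover have "F ((-1) *\<^sub>R k) = - F k" using linear_cmul[OF lin, of "-1" k] by simp
    ultimately have "F m \<le> 1" "- F m \<le> 1" using bound by auto
    then show ?thesis by linarith
  qed
  define N where "N = (+) x ` (*\<^sub>R) (e/2) ` M"
  have "open N" unfolding N_def using e \<open>open M\<close> by (intro tvs_open_translation tvs_open_scaling) auto
  moreover have "0 \<in> M" unfolding M_def using assms(3) image_eqI[of 0 "(*\<^sub>R) (-1)" 0 K] by simp
  then have "x + (e/2) *\<^sub>R 0 \<in> N" unfolding N_def by (intro imageI)
  then have "x \<in> N" by simp
  moreover have "F y \<in> S" if y: "y \<in> N" for y
  proof -
    obtain m where m: "m \<in> M" "y = x + (e/2) *\<^sub>R m" using y unfolding N_def by auto
    have "dist (F y) (F x) = (e/2) * \<bar>F m\<bar>"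
      using m(2) e linear_add[OF lin] linear_cmul[OF lin] by (simp add: dist_real_def abs_mult)
    also have "\<dots> < e" using FM[OF m(1)] e by simp
    finally show ?thesis using e by auto
  qed
  ultimately show "\<exists>A. open A \<and> x \<in> A \<and> (\<forall>y\<in>UNIV. y \<in> A \<longrightarrow> F y \<in> S)" by blast
qed

definition minkowski_gauge :: "'a::real_vector set \<Rightarrow> 'a \<Rightarrow> real" where
  "minkowski_gauge K x = Inf {t. t > 0 \<and> (1/t) *\<^sub>R x \<in> K}"

lemma minkowski_gauge_le: "t > 0 \<Longrightarrow> (1/t) *\<^sub>R x \<in> K \<Longrightarrow> minkowski_gauge K x \<le> t"
  unfolding minkowski_gauge_def by (rule cInf_lower) (auto intro: bdd_belowI[where m=0])

lemma minkowski_gauge_greatest: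
  fixes K :: "'a::topological_real_vector set"
  assumes "open K" "0 \<in> K" and "\<And>t. t > 0 \<Longrightarrow> (1/t) *\<^sub>R x \<in> K \<Longrightarrow> z \<le> t"
  shows "z \<le> minkowski_gauge K x"
proof -
  obtain e where "e > 0" "\<forall>d. \<bar>d\<bar> < e \<longrightarrow> d *\<^sub>R x \<in> K" using tvs_open_absorbing[OF assms(1,2)] by blast
  then have "(1/(2/e)) *\<^sub>R x \<in> K" by simp
  then have "{t. t > 0 \<and> (1/t) *\<^sub>R x \<in> K} \<noteq> {}" using \<open>e > 0\<close>
    by (metis (mono_tags, lifting) empty_iff mem_Collect_eq zero_less_divide_iff zero_less_numeral)
  then show ?thesis unfolding minkowski_gauge_def using assms(3) by (intro cInf_greatest) auto
qed

lemma minkowski_gauge_ge_1: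
  fixes K :: "'a::topological_real_vector set"
  assumes "open K" "convex K" "0 \<in> K" "z \<notin> K"
  shows "1 \<le> minkowski_gauge K z"
proof (rule minkowski_gauge_greatest[OF assms(1,3)], rule ccontr)
  fix t :: real assume t: "t > 0" "(1/t) *\<^sub>R z \<in> K" "\<not> 1 \<le> t"
  have "t *\<^sub>R ((1/t) *\<^sub>R z) + (1 - t) *\<^sub>R 0 \<in> K"
    using t assms(3) by (intro convexD[OF assms(2)]) auto
  then show False using t assms(4) by simp
qed

lemma sublinear_minkowski_gauge:
  fixes K :: "'a::topological_real_vector set"
  assumes oK: "open K" and cK: "convex K" and K0: "0 \<in> K"
  shows "sublinear (minkowski_gauge K)"
proof -
  note greatest = minkowski_gauge_greatest[OF oK K0]
  have "minkowski_gauge K (x + y) \<le> minkowski_gauge K x + minkowski_gauge K y" for x y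
  proof -
    have sum: "minkowski_gauge K (x + y) \<le> s + t"
      if st: "s > 0" "(1/s) *\<^sub>R x \<in> K" "t > 0" "(1/t) *\<^sub>R y \<in> K" for s t
    proof (rule minkowski_gauge_le)
      have "(s/(s+t)) *\<^sub>R ((1/s) *\<^sub>R x) + (t/(s+t)) *\<^sub>R ((1/t) *\<^sub>R y) \<in> K"
        using st by (intro convexD[OF cK]) (auto simp: add_divide_distrib[symmetric])
      then show "(1/(s+t)) *\<^sub>R (x + y) \<in> K" using st by (simp add: scaleR_add_right)
    qed (use st in auto)
    then have "minkowski_gauge K (x + y) - t \<le> minkowski_gauge K x"
      if "t > 0" "(1/t) *\<^sub>R y \<in> K" for t
      using that by (intro greatest) force
    then have "minkowski_gauge K (x + y) - minkowski_gauge K x \<le> minkowski_gauge K y"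
      by (intro greatest) force
    then show ?thesis by simp
  qed
  moreover have "minkowski_gauge K (t *\<^sub>R x) \<le> t * minkowski_gauge K x" if t: "t > 0" for t x
  proof -
    have "minkowski_gauge K (t *\<^sub>R x) / t \<le> minkowski_gauge K x"
    proof (rule greatest)
      fix s :: real assume s: "s > 0" "(1/s) *\<^sub>R x \<in> K"
      then have "minkowski_gauge K (t *\<^sub>R x) \<le> t * s" using t by (intro minkowski_gauge_le) auto
      then show "minkowski_gauge K (t *\<^sub>R x) / t \<le> s" using t by (simp add: field_simps)
    qed
    then show ?thesis using t by (simp add: field_simps)
  qed
  ultimately show ?thesis by (simp add: sublinear_def)
qed

lemma tvs_separation_open_convex:
  fixes K :: "'a::topological_real_vector set"
  assumes oK: "open K" and cK: "convex K" and K0: "0 \<in> K" and z: "z \<notin> K"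
  shows "\<exists>F\<in>topdual. 1 \<le> F z \<and> (\<forall>k\<in>K. F k \<le> 1)"
proof -
  obtain F where F: "linear F" "\<forall>x. F x \<le> minkowski_gauge K x" "1 \<le> F z"
    using hahn_banach_sublinear[OF sublinear_minkowski_gauge[OF oK cK K0]
                                   minkowski_gauge_ge_1[OF assms]] by blast
  have "F k \<le> 1" if "k \<in> K" for k
  proof -
    have "minkowski_gauge K k \<le> 1" using minkowski_gauge_le[of 1 k K] that by simp
    with F(2) show ?thesis by (meson order.trans)
  qed
  then show ?thesis
    using F tvs_linear_continuous_if_bounded_above[OF F(1) oK K0] by (auto simp: topdual_def)
qed

lemma tvs_separation_point_set_plus_Z:
  fixes A W :: "'a::topological_real_vector set"
  assumes cA: "convex A" and a0: "a0 \<in> A" and oW: "open W" and cW: "convex W" and W0: "0 \<in> W"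
    and z: "z \<notin> set_plus_Z A W"
  shows "\<exists>F\<in>topdual. F \<noteq> (\<lambda>_. 0) \<and> (\<forall>a\<in>A. \<forall>w\<in>W. F a + F w \<le> F z)"
proof -
  define K where "K = (+) (- a0) ` set_plus_Z A W"
  have "set_plus_Z A W = (\<Union>a\<in>A. \<Union>w\<in>W. {a + w})" by (auto simp: set_plus_Z_def)
  then have "convex K" unfolding K_def using cA cW by (simp add: convex_translation convex_sums)
  moreover have "open K" unfolding K_def by (intro tvs_open_translation tvs_open_set_plus_Z oW)
  moreover have "a0 + 0 \<in> set_plus_Z A W" unfolding set_plus_Z_def using a0 W0 by blast
  then have "0 \<in> K" unfolding K_def by (rule image_eqI[rotated]) simp
  moreover have "z - a0 \<notin> K"
  proof
    assume "z - a0 \<in> K"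
    then obtain s where "s \<in> set_plus_Z A W" "z - a0 = - a0 + s" unfolding K_def by blast
    then show False using z by (simp add: algebra_simps)
  qed
  ultimately obtain F where F: "F \<in> topdual" "1 \<le> F (z - a0)" "\<forall>k\<in>K. F k \<le> 1"
    using tvs_separation_open_convex by blast
  have lin: "linear F" using F(1) by (simp add: topdual_def)
  have "F a + F w \<le> F z" if "a \<in> A" "w \<in> W" for a w
  proof -
    have "- a0 + (a + w) \<in> K" unfolding K_def set_plus_Z_def using that by blast
    then have "F (- a0 + (a + w)) \<le> F (z - a0)" using F(2,3) by force
    then show ?thesis using linear_add[OF lin] linear_diff[OF lin] linear_neg[OF lin] by simp
  qed
  moreover have "F \<noteq> (\<lambda>_. 0)" using F(2) by auto
  ultimately show ?thesis using F(1) by blast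
qed

section \<open>Scalarization and the main theorem\<close>

lemma linear_bounded_above_imp_nonpos_on_cone:
  fixes F :: "'a::topological_real_vector \<Rightarrow> real"
  assumes lin: "linear F" and cone: "cone C" and A: "A \<in> FZC C" and a0: "a0 \<in> A"
    and bound: "\<forall>a\<in>A. F a \<le> M" and c: "c \<in> C"
  shows "F c \<le> 0"
proof (rule ccontr)
  assume "\<not> F c \<le> 0"
  define s where "s = (\<bar>M - F a0\<bar> + 1) / F c"
  have "s \<ge> 0" and sFc: "s * F c = \<bar>M - F a0\<bar> + 1" using \<open>\<not> F c \<le> 0\<close> by (auto simp: s_def)
  then have "a0 + s *\<^sub>R c \<in> set_plus_Z A C"
    unfolding set_plus_Z_def using a0 c cone by (auto simp: cone_def)
  moreover have "A = closure (set_plus_Z A C)" using A by (simp add: FZC_def)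
  ultimately have "a0 + s *\<^sub>R c \<in> A" using closure_subset by blast
  then have "F a0 + s * F c \<le> M" using bound linear_add[OF lin] linear_cmul[OF lin] by force
  then show False using sFc by linarith
qed

lemma separating_multiple_of_generator:
  fixes A W :: "'z::topological_real_vector set"
  assumes cone: "cone C" and A: "A \<in> FZC C" "convex A" "a0 \<in> A"
    and W: "open W" "convex W" "0 \<in> W" and z: "z \<notin> set_plus_Z A W"
    and B_gen: "{(\<lambda>z. t * zs z) | t zs. t \<ge> 0 \<and> zs \<in> B} = neg_dual_cone C"
  shows "\<exists>b\<in>B. \<forall>a\<in>A. \<forall>w\<in>W. b a + b w \<le> b z"
proof -
  obtain F where F: "F \<in> topdual" "F \<noteq> (\<lambda>_. 0)" and sep: "\<forall>a\<in>A. \<forall>w\<in>W. F a + F w \<le> F z"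
    using tvs_separation_point_set_plus_Z[OF A(2,3) W z] by blast
  have lin: "linear F" using F(1) by (simp add: topdual_def)
  have "\<forall>a\<in>A. F a \<le> F z" using sep W(3) linear_0[OF lin] by force
  then have "\<forall>c\<in>C. F c \<le> 0"
    using linear_bounded_above_imp_nonpos_on_cone[OF lin cone A(1,3)] by blast
  then have "F \<in> neg_dual_cone C" using F(1) by (simp add: neg_dual_cone_def)
  then obtain t b where tb: "t \<ge> 0" "b \<in> B" "F = (\<lambda>z. t * b z)" using B_gen by blast
  with F(2) have "t > 0" by force
  then have "\<forall>a\<in>A. \<forall>w\<in>W. b a + b w \<le> b z"
    using sep tb(3) by (simp add: distrib_left[symmetric])
  then show ?thesis using tb(2) by blast
qed

lemma uniform_margin_on_nbhd:
  fixes W :: "'z::topological_real_vector set"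
  assumes B_sub: "B \<subseteq> topdual"
    and B_inf: "\<forall>V. is_nbhd V (0::'z) \<longrightarrow> (INF zs\<in>B. SUP z\<in>V. ereal (- zs z)) > 0"
    and W: "open W" "0 \<in> W"
  shows "\<exists>\<epsilon>>0. \<forall>b\<in>B. \<exists>w\<in>W. \<epsilon> < b w"
proof -
  have "is_nbhd ((*\<^sub>R) (-1) ` W) 0"
    unfolding is_nbhd_def using tvs_open_scaling[OF W(1), of "-1"] W(2) by force
  then have "0 < (INF zs\<in>B. SUP z\<in>(*\<^sub>R) (-1) ` W. ereal (- zs z))" using B_inf by blast
  then obtain \<epsilon> where "0 < ereal \<epsilon>" and \<epsilon>: "ereal \<epsilon> < (INF zs\<in>B. SUP z\<in>(*\<^sub>R) (-1) ` W. ereal (- zs z))"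
    using ereal_dense2 by blast
  moreover have "\<exists>w\<in>W. \<epsilon> < b w" if b: "b \<in> B" for b
  proof -
    obtain w where "w \<in> W" "\<epsilon> < - b ((-1) *\<^sub>R w)"
      using less_INF_D[OF \<epsilon> b] by (auto simp: less_SUP_iff)
    moreover have "linear b" using b B_sub by (auto simp: topdual_def)
    ultimately show ?thesis using linear_cmul[of b "-1" w] by auto
  qed
  ultimately show ?thesis by auto
qed

lemma scalarization_le_minus_margin:
  assumes "z \<in> f x" and "w \<in> W" and "\<epsilon> < b w" and "\<forall>a\<in>f x0. \<forall>w\<in>W. b a + b w \<le> b z"
  shows "scalarization f b x \<le> scalarization f b x0 - ereal \<epsilon>"
proof -
  have "scalarization f b x \<le> ereal (- b z)"
    unfolding scalarization_def using assms(1) by (rule INF_lower)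
  also have "\<dots> = ereal (- b z + \<epsilon>) - ereal \<epsilon>" by simp
  also have "\<dots> \<le> scalarization f b x0 - ereal \<epsilon>"
    unfolding scalarization_def using assms(2-4)
    by (intro ereal_minus_mono INF_greatest) (auto, fastforce)
  finally show ?thesis .
qed

theorem mainTheorem17:
  fixes f :: "'x::topological_real_vector \<Rightarrow> 'z::locally_convex_tvs set"
    and C :: "'z set" and x0 :: 'x and B :: "('z \<Rightarrow> real) set"
  assumes C_ne: "C \<noteq> {}" and C_closed: "closed C" and C_convex: "convex C" and C_cone: "cone C"
    and C_neg: "neg_dual_cone C \<noteq> {(\<lambda>_. 0)}"
    and f_F: "\<forall>x. f x \<in> FZC C"
    and f_convex: "\<forall>x. convex (f x)"
    and B_sub: "B \<subseteq> topdual"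
    and B_gen: "{(\<lambda>z. t * zs z) | t zs. t \<ge> 0 \<and> zs \<in> B} = neg_dual_cone C"
    and B_sup: "\<forall>z. (SUP zs\<in>B. ereal (zs z)) < \<infinity>"
    and B_inf: "\<forall>V. is_nbhd V (0::'z) \<longrightarrow> (INF zs\<in>B. SUP z\<in>V. ereal (- zs z)) > 0"
    and unif_lsc: "\<forall>\<epsilon>>0. \<exists>U. is_nbhd U x0 \<and>
        (\<forall>x\<in>U. \<forall>zs\<in>B. scalarization f zs x > scalarization f zs x0 - ereal \<epsilon>)"
  shows "hausdorff_upper_continuous_at f x0"
  unfolding hausdorff_upper_continuous_at_def
proof (intro allI impI)
  fix V :: "'z set" assume "is_nbhd V 0"
  then obtain W where W: "open W" "0 \<in> W" "W \<subseteq> V" "convex W"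
    using locally_convex unfolding is_nbhd_def convex_def by (metis subset_trans)
  obtain \<epsilon> where "\<epsilon> > 0" and margin: "\<forall>b\<in>B. \<exists>w\<in>W. \<epsilon> < b w"
    using uniform_margin_on_nbhd[OF B_sub B_inf W(1,2)] by blast
  then obtain U where U: "is_nbhd U x0" and lsc: "\<forall>x\<in>U. \<forall>b\<in>B. scalarization f b x > scalarization f b x0 - ereal \<epsilon>"
    using unif_lsc by blast
  have "(\<lambda>_. 0) \<in> neg_dual_cone C" by (auto simp: neg_dual_cone_def topdual_def linear_zero)
  then obtain b0 where "b0 \<in> B" using B_gen by blast
  moreover have "x0 \<in> U" using U by (auto simp: is_nbhd_def)
  ultimately have "scalarization f b0 x0 - ereal \<epsilon> < scalarization f b0 x0" using lsc by blast
  then have "scalarization f b0 x0 \<noteq> \<infinity>" by auto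
  then obtain a0 where a0: "a0 \<in> f x0" by (force simp: scalarization_def top_ereal_def)
  have "z \<in> set_plus_Z (f x0) V" if "x \<in> U" "z \<in> f x" for x z
  proof (rule ccontr)
    assume "z \<notin> set_plus_Z (f x0) V"
    then have "z \<notin> set_plus_Z (f x0) W" using W(3) by (auto simp: set_plus_Z_def)
    then obtain b where "b \<in> B" and sep: "\<forall>a\<in>f x0. \<forall>w\<in>W. b a + b w \<le> b z"
      using separating_multiple_of_generator[OF C_cone f_F[rule_format] f_convex[rule_format] a0 W(1,4,2)
          _ B_gen] by blast
    with margin obtain w where "w \<in> W" "\<epsilon> < b w" by blast
    with sep \<open>z \<in> f x\<close> have "scalarization f b x \<le> scalarization f b x0 - ereal \<epsilon>"
      by (intro scalarization_le_minus_margin)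
    with lsc \<open>x \<in> U\<close> \<open>b \<in> B\<close> show False by force
  qed
  with U show "\<exists>U. is_nbhd U x0 \<and> (\<forall>x\<in>U. f x \<subseteq> set_plus_Z (f x0) V)" by blast
qed

end
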